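(* Let $n\geqslant1$, $N\in\mathbb{N}$, $\gamma\in\mathbb{R}\setminus\{0\}$, let $a_0,\ldots,a_n$ be holomorphic near $t=0$ with $a_n\equiv1$, and let $M(x,t,u_0,\ldots,u_n)=t^{-\mu}\widetilde M(x,t,u_0,\ldots,u_n)$, where $\mu\geqslant0$ is an integer and $\widetilde M$ is holomorphic near $0\in\mathbb{C}^{n+3}$ ($\mu$ is the pole order of $M$ at $t=0$). Assume that for every integer $k\geqslant1$ the polynomial $P_k(\lambda)=\sum_{j=0}^n a_j(0)(k+N+{\rm i}\gamma\lambda)^j$ has no integer roots. Let $\psi=\sum_{k=1}^\infty c_k(x^{{\rm i}\gamma})x^k$, with $c_k$ meromorphic at $t=0$, be a formal solution of $$\sum_{j=0}^n a_j(x^{{\rm i}\gamma})(\delta+N)^j u=x\,M(x,x^{{\rm i}\gamma},u,\delta u,\ldots,\delta^n u),\qquad\delta=x\frac{d}{dx}.$$ Then for every $k\geqslant1$, the pole order $\nu_k$ of $c_k(t)$ at $t=0$ satisfies $\nu_k\leqslant k\mu$.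
   Context: $x^{{\rm i}\gamma}=e^{{\rm i}\gamma\ln x}$. On exotic series $\delta$ acts termwise by $\delta\bigl(p(x^{{\rm i}\gamma})x^k\bigr)=\bigl((k+{\rm i}\gamma\,t\tfrac{d}{dt})p\bigr)(x^{{\rm i}\gamma})x^k$; substitution into $M$ is formal. The pole order of $c_k$ is the integer $\nu_k$ with $c_k(t)=t^{-\nu_k}\cdot(\text{holomorphic function nonvanishing at }0)$ (negative if $c_k$ vanishes at $0$). *)

theory Defs
  imports "HOL-Complex_Analysis.Complex_Analysis" "HOL-Library.FuncSet"
begin

text \<open>The operator s + i*gamma*t*d/dt acting on a function of t.  Applied to the
  coefficient of x^k with s = k (+N), it realises delta (resp. delta + N) termwise.\<close>
definition dop :: "real \<Rightarrow> complex \<Rightarrow> (complex \<Rightarrow> complex) \<Rightarrow> (complex \<Rightarrow> complex)" where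
  "dop \<gamma> s f = (\<lambda>t. s * f t + \<i> * complex_of_real \<gamma> * t * deriv f t)"

text \<open>For fixed t, the formal power series in x of delta^j psi, where
  psi = sum_{k>=1} c_k(t) x^k.\<close>
definition delta_ser :: "real \<Rightarrow> nat \<Rightarrow> (nat \<Rightarrow> complex \<Rightarrow> complex) \<Rightarrow> complex \<Rightarrow> complex fps" where
  "delta_ser \<gamma> j c t = Abs_fps (\<lambda>k. if k = 0 then 0 else ((dop \<gamma> (of_nat k)) ^^ j) (c k) t)"

definition multi_idx :: "nat \<Rightarrow> (nat \<Rightarrow> nat) set" where
  "multi_idx n = PiE {..n} (\<lambda>_. UNIV)"

text \<open>Mt(x,t,u) = sum_{p,q,beta} m p q beta x^p t^q u^beta, holomorphic near 0 in C^(n+3):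
  the Taylor series converges absolutely on some polydisc of radius rho > 0.\<close>
definition holo_coeffs :: "nat \<Rightarrow> (nat \<Rightarrow> nat \<Rightarrow> (nat \<Rightarrow> nat) \<Rightarrow> complex) \<Rightarrow> bool" where
  "holo_coeffs n m \<longleftrightarrow> (\<exists>\<rho>>0. (\<lambda>(p, q, \<beta>). norm (m p q \<beta>) * \<rho> ^ (p + q + sum \<beta> {..n}))
       summable_on (UNIV \<times> UNIV \<times> multi_idx n))"

text \<open>Coefficient of x^K (a function of t) of the formal substitution
  Mt(x, t, u_0, ..., u_n) with u_j = delta^j psi.  Since each u_j has no x^0 term,
  only multi-indices with all entries at most K can contribute.\<close>
definition subst_coeff ::
  "nat \<Rightarrow> real \<Rightarrow> (nat \<Rightarrow> nat \<Rightarrow> (nat \<Rightarrow> nat) \<Rightarrow> complex) \<Rightarrow> (nat \<Rightarrow> complex \<Rightarrow> complex) \<Rightarrow> nat \<Rightarrow> complex \<Rightarrow> complex" where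
  "subst_coeff n \<gamma> m c K t =
     (\<Sum>p\<in>{..K}. \<Sum>\<beta>\<in>PiE {..n} (\<lambda>_. {..K}).
        (\<Sum>q. m p q \<beta> * t ^ q) * fps_nth (\<Prod>j\<in>{..n}. (delta_ser \<gamma> j c t) ^ \<beta> j) (K - p))"

end

theory Submission
  imports Defs
begin

text \<open>If c_j has pole order at most j\<mu> for j < k, then every coefficient of
  \<delta>^j \<psi> up to x^(k-1) has the same kind of bound, products of series respect the grading
  i \<mapsto> i\<mu>, and the coefficient of x^(k-1) of M(x, t, \<psi>, ..., \<delta>^n \<psi>) has pole order at most
  (k-1)\<mu>; with the factor t^-\<mu> the right-hand side of the equation for c_k has pole order at most
  k\<mu>.  If c_k = t^-\<nu> h with h(0) \<noteq> 0 and \<nu> > k\<mu>, then \<delta> + N acts on the leading term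
  t^-\<nu> as multiplication by k + N - i\<gamma>\<nu>, so the leading coefficient of the left-hand side is
  P_k(-\<nu>) h(0), which must vanish: a contradiction with the hypothesis on P_k.\<close>

definition pole_bound_lead :: "nat \<Rightarrow> (complex \<Rightarrow> complex) \<Rightarrow> complex \<Rightarrow> bool" where
  "pole_bound_lead e f v \<longleftrightarrow> (\<exists>\<rho>>0. \<exists>g. g holomorphic_on ball 0 \<rho> \<and> g 0 = v \<and>
      (\<forall>t\<in>ball 0 \<rho> - {0}. f t = g t / t ^ e))"

definition pole_bound :: "nat \<Rightarrow> (complex \<Rightarrow> complex) \<Rightarrow> bool" where
  "pole_bound e f \<longleftrightarrow> (\<exists>v. pole_bound_lead e f v)"

definition pole_order_le :: "(complex \<Rightarrow> complex) \<Rightarrow> int \<Rightarrow> bool" where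
  "pole_order_le f E \<longleftrightarrow> (\<forall>\<nu>::int. \<forall>h::complex \<Rightarrow> complex.
      ((\<exists>\<rho>>0. h holomorphic_on ball 0 \<rho>) \<and> h 0 \<noteq> 0 \<and>
       (\<forall>\<^sub>F t in at 0. f t = t powi (- \<nu>) * h t)) \<longrightarrow> \<nu> \<le> E)"

lemma pole_bound_lead_holomorphic:
  "g holomorphic_on ball 0 \<rho> \<Longrightarrow> \<rho> > 0 \<Longrightarrow> pole_bound_lead 0 g (g 0)"
  unfolding pole_bound_lead_def by auto

lemma pole_bound_lead_const: "pole_bound_lead 0 (\<lambda>_. c) c"
  by (rule pole_bound_lead_holomorphic[of _ 1, simplified]) auto

lemma pole_bound_lead_zero: "pole_bound_lead e (\<lambda>_. 0) 0"
  unfolding pole_bound_lead_def by (rule exI[of _ 1], auto intro!: exI[of _ "\<lambda>_. 0"])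

lemma pole_bound_lead_inverse_power: "pole_bound_lead e (\<lambda>t. inverse (t ^ e)) 1"
  unfolding pole_bound_lead_def
  by (rule exI[of _ 1], auto intro!: exI[of _ "\<lambda>_. 1"] simp: divide_inverse)

lemma pole_bound_lead_mult:
  assumes "pole_bound_lead a f v" "pole_bound_lead b f' w"
  shows "pole_bound_lead (a + b) (\<lambda>t. f t * f' t) (v * w)"
proof -
  obtain \<rho>1 g1 where 1: "\<rho>1 > 0" "g1 holomorphic_on ball 0 \<rho>1" "g1 0 = v"
    "\<forall>t\<in>ball 0 \<rho>1 - {0}. f t = g1 t / t ^ a" using assms(1) unfolding pole_bound_lead_def by blast
  obtain \<rho>2 g2 where 2: "\<rho>2 > 0" "g2 holomorphic_on ball 0 \<rho>2" "g2 0 = w"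
    "\<forall>t\<in>ball 0 \<rho>2 - {0}. f' t = g2 t / t ^ b" using assms(2) unfolding pole_bound_lead_def by blast
  show ?thesis unfolding pole_bound_lead_def
  proof (intro exI[of _ "min \<rho>1 \<rho>2"] conjI exI[of _ "\<lambda>t. g1 t * g2 t"] ballI)
    show "(\<lambda>t. g1 t * g2 t) holomorphic_on ball 0 (min \<rho>1 \<rho>2)"
      by (intro holomorphic_on_mult; rule holomorphic_on_subset[OF 1(2)] holomorphic_on_subset[OF 2(2)]) auto
    fix t :: complex assume "t \<in> ball 0 (min \<rho>1 \<rho>2) - {0}"
    then show "f t * f' t = g1 t * g2 t / t ^ (a + b)" using 1(4) 2(4)
      by (auto simp: power_add)
  qed (use 1 2 in auto)
qed

lemma pole_bound_lead_add:
  assumes "pole_bound_lead e f v" "pole_bound_lead e f' w"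
  shows "pole_bound_lead e (\<lambda>t. f t + f' t) (v + w)"
proof -
  obtain \<rho>1 g1 where 1: "\<rho>1 > 0" "g1 holomorphic_on ball 0 \<rho>1" "g1 0 = v"
    "\<forall>t\<in>ball 0 \<rho>1 - {0}. f t = g1 t / t ^ e" using assms(1) unfolding pole_bound_lead_def by blast
  obtain \<rho>2 g2 where 2: "\<rho>2 > 0" "g2 holomorphic_on ball 0 \<rho>2" "g2 0 = w"
    "\<forall>t\<in>ball 0 \<rho>2 - {0}. f' t = g2 t / t ^ e" using assms(2) unfolding pole_bound_lead_def by blast
  show ?thesis unfolding pole_bound_lead_def
  proof (intro exI[of _ "min \<rho>1 \<rho>2"] conjI exI[of _ "\<lambda>t. g1 t + g2 t"] ballI)
    show "(\<lambda>t. g1 t + g2 t) holomorphic_on ball 0 (min \<rho>1 \<rho>2)"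
      by (intro holomorphic_on_add; rule holomorphic_on_subset[OF 1(2)] holomorphic_on_subset[OF 2(2)]) auto
    fix t :: complex assume "t \<in> ball 0 (min \<rho>1 \<rho>2) - {0}"
    then show "f t + f' t = (g1 t + g2 t) / t ^ e" using 1(4) 2(4)
      by (auto simp: add_divide_distrib)
  qed (use 1 2 in auto)
qed

lemma pole_bound_lead_sum:
  assumes "finite I" "\<forall>i\<in>I. pole_bound_lead e (f i) (v i)"
  shows "pole_bound_lead e (\<lambda>t. \<Sum>i\<in>I. f i t) (\<Sum>i\<in>I. v i)"
  using assms by (induction I rule: finite_induct) (auto intro: pole_bound_lead_add pole_bound_lead_zero)

lemma pole_bound_mult: "pole_bound a f \<Longrightarrow> pole_bound b f' \<Longrightarrow> pole_bound (a + b) (\<lambda>t. f t * f' t)"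
  unfolding pole_bound_def using pole_bound_lead_mult by blast

lemma pole_bound_sum:
  assumes "finite I" "\<forall>i\<in>I. pole_bound e (f i)"
  shows "pole_bound e (\<lambda>t. \<Sum>i\<in>I. f i t)"
proof -
  from assms(2) obtain v where "\<forall>i\<in>I. pole_bound_lead e (f i) (v i)"
    unfolding pole_bound_def by metis
  then show ?thesis using pole_bound_lead_sum[OF assms(1)] unfolding pole_bound_def by blast
qed

lemma pole_bound_mono:
  assumes "pole_bound e f" "e \<le> e'"
  shows "pole_bound e' f"
proof -
  obtain \<rho> g where 1: "\<rho> > 0" "g holomorphic_on ball 0 \<rho>"
    "\<forall>t\<in>ball 0 \<rho> - {0}. f t = g t / t ^ e"
    using assms(1) unfolding pole_bound_def pole_bound_lead_def by blast
  show ?thesis unfolding pole_bound_def pole_bound_lead_def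
  proof (intro exI[of _ \<rho>] exI conjI exI[of _ "\<lambda>t. g t * t ^ (e' - e)"] ballI)
    fix t :: complex assume t: "t \<in> ball 0 \<rho> - {0}"
    have "t ^ e' = t ^ e * t ^ (e' - e)" using assms(2) by (simp add: power_add[symmetric])
    then show "f t = g t * t ^ (e' - e) / t ^ e'" using 1(3) t by auto
  qed (use 1 in \<open>auto intro!: holomorphic_intros\<close>)
qed

lemma deriv_divide_power:
  assumes "g holomorphic_on ball 0 \<rho>" "t \<in> ball 0 \<rho> - {0}"
    and "\<forall>x\<in>ball 0 \<rho> - {0}. f x = g x / x ^ e"
  shows "t * deriv f t = (t * deriv g t - of_nat e * g t) / t ^ e"
proof -
  have t: "t \<noteq> 0" using assms(2) by auto
  have ev: "\<forall>\<^sub>F x in nhds t. f x = g x / x ^ e"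
  proof -
    have "\<forall>\<^sub>F x in nhds t. x \<in> ball 0 \<rho> - {0}"
      using assms(2) by (intro eventually_nhds_in_open) auto
    then show ?thesis by eventually_elim (use assms(3) in auto)
  qed
  have "(g has_field_derivative deriv g t) (at t)"
    using assms(1,2) by (intro holomorphic_derivI) auto
  then have "((\<lambda>x. g x / x ^ e) has_field_derivative
      (deriv g t * t ^ e - g t * (of_nat e * t ^ (e - 1))) / (t ^ e * t ^ e)) (at t)"
    using t by (auto intro!: derivative_eq_intros)
  then have "deriv f t = (deriv g t * t ^ e - g t * (of_nat e * t ^ (e - 1))) / (t ^ e * t ^ e)"
    using deriv_cong_ev[OF ev refl] DERIV_imp_deriv by metis
  then have "t * deriv f t = t * ((deriv g t * t ^ e - g t * (of_nat e * t ^ (e - 1))) / (t ^ e * t ^ e))"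
    by simp
  also have "\<dots> = (t * deriv g t * t ^ e - g t * (t * (of_nat e * t ^ (e - 1)))) / (t ^ e * t ^ e)"
    by (simp add: algebra_simps)
  also have "t * (of_nat e * t ^ (e - 1)) = of_nat e * t ^ e"
    by (cases e) auto
  also have "(t * deriv g t * t ^ e - g t * (of_nat e * t ^ e)) / (t ^ e * t ^ e)
      = (t * deriv g t - of_nat e * g t) / t ^ e"
    using t by (simp add: field_simps)
  finally show ?thesis .
qed

lemma pole_bound_lead_dop:
  assumes "pole_bound_lead e f v"
  shows "pole_bound_lead e (dop \<gamma> s f) ((s - \<i> * of_real \<gamma> * of_nat e) * v)"
proof -
  obtain \<rho> g where 1: "\<rho> > 0" "g holomorphic_on ball 0 \<rho>" "g 0 = v"
    "\<forall>t\<in>ball 0 \<rho> - {0}. f t = g t / t ^ e" using assms unfolding pole_bound_lead_def by blast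
  define \<sigma> where "\<sigma> = s - \<i> * of_real \<gamma> * of_nat e"
  show ?thesis unfolding pole_bound_lead_def \<sigma>_def[symmetric]
  proof (intro exI[of _ \<rho>] conjI exI[of _ "\<lambda>t. \<sigma> * g t + \<i> * of_real \<gamma> * t * deriv g t"] ballI)
    show "(\<lambda>t. \<sigma> * g t + \<i> * of_real \<gamma> * t * deriv g t) holomorphic_on ball 0 \<rho>"
      using 1(2) by (intro holomorphic_intros) auto
    fix t :: complex assume t: "t \<in> ball 0 \<rho> - {0}"
    have "dop \<gamma> s f t = s * (g t / t ^ e) + \<i> * of_real \<gamma> * (t * deriv f t)"
      using t 1(4) unfolding dop_def by (simp add: mult.assoc)
    also have "\<dots> = (\<sigma> * g t + \<i> * of_real \<gamma> * t * deriv g t) / t ^ e"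
      using t unfolding deriv_divide_power[OF 1(2) t 1(4)] \<sigma>_def by (simp add: field_simps)
    finally show "dop \<gamma> s f t = (\<sigma> * g t + \<i> * of_real \<gamma> * t * deriv g t) / t ^ e" .
  qed (use 1 in auto)
qed

lemma pole_bound_lead_dop_funpow:
  assumes "pole_bound_lead e f v"
  shows "pole_bound_lead e ((dop \<gamma> s ^^ j) f) ((s - \<i> * of_real \<gamma> * of_nat e) ^ j * v)"
proof (induction j)
  case 0
  then show ?case using assms by simp
next
  case (Suc j)
  then show ?case using pole_bound_lead_dop[OF Suc] by (simp add: mult.assoc)
qed

lemma pole_bound_lead_eq_zero_if_lower:
  assumes "pole_bound_lead a f v" "pole_bound b f'" "\<forall>\<^sub>F t in at 0. f t = f' t" "b < a"
  shows "v = 0"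
proof -
  obtain \<rho>1 g1 where 1: "\<rho>1 > 0" "g1 holomorphic_on ball 0 \<rho>1" "g1 0 = v"
    "\<forall>t\<in>ball 0 \<rho>1 - {0}. f t = g1 t / t ^ a" using assms(1) unfolding pole_bound_lead_def by blast
  obtain \<rho>2 g2 where 2: "\<rho>2 > 0" "g2 holomorphic_on ball 0 \<rho>2"
    "\<forall>t\<in>ball 0 \<rho>2 - {0}. f' t = g2 t / t ^ b"
    using assms(2) unfolding pole_bound_def pole_bound_lead_def by blast
  have "isCont g1 0"
    using 1 by (intro continuous_on_interior[OF holomorphic_on_imp_continuous_on[OF 1(2)]]) auto
  then have lim_v: "(g1 \<longlongrightarrow> v) (at 0)" using 1(3) by (simp add: isCont_def)
  have "isCont g2 0"
    using 2 by (intro continuous_on_interior[OF holomorphic_on_imp_continuous_on[OF 2(2)]]) auto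
  then have "((\<lambda>t. g2 t * t ^ (a - b)) \<longlongrightarrow> g2 0 * 0 ^ (a - b)) (at 0)"
    unfolding isCont_def by (intro tendsto_intros) auto
  then have lim_0: "((\<lambda>t. g2 t * t ^ (a - b)) \<longlongrightarrow> 0) (at 0)"
    using assms(4) by (simp add: power_0_left)
  have "\<forall>\<^sub>F t in at 0. t \<in> ball 0 (min \<rho>1 \<rho>2) - {0}"
    using 1(1) 2(1) by (auto simp: eventually_at dist_commute intro!: exI[of _ "min \<rho>1 \<rho>2"])
  then have "\<forall>\<^sub>F t in at 0. g2 t * t ^ (a - b) = g1 t"
    using assms(3)
  proof eventually_elim
    case (elim t)
    then have "t \<noteq> 0" "g1 t / t ^ a = g2 t / t ^ b" using 1(4) 2(3) by auto
    moreover have "t ^ a = t ^ b * t ^ (a - b)" using assms(4) by (simp add: power_add[symmetric])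
    ultimately show ?case by (auto simp: field_simps)
  qed
  then have "(g1 \<longlongrightarrow> 0) (at 0)" by (rule Lim_transform_eventually[OF lim_0])
  then show ?thesis using lim_v tendsto_unique[OF at_neq_bot] by blast
qed

lemma pole_bound_lead_of_powi:
  assumes "\<nu> \<ge> 0" "\<rho> > 0" "h holomorphic_on ball 0 \<rho>" "\<forall>\<^sub>F t in at 0. f t = t powi (- \<nu>) * h t"
  shows "pole_bound_lead (nat \<nu>) f (h 0)"
proof -
  obtain d where d: "d > 0" "\<forall>x. x \<noteq> 0 \<and> dist x 0 < d \<longrightarrow> f x = x powi (- \<nu>) * h x"
    using assms(4) by (auto simp: eventually_at)
  show ?thesis unfolding pole_bound_lead_def
  proof (intro exI[of _ "min \<rho> d"] conjI exI[of _ h] ballI)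
    show "h holomorphic_on ball 0 (min \<rho> d)" by (rule holomorphic_on_subset[OF assms(3)]) auto
    fix t :: complex assume "t \<in> ball 0 (min \<rho> d) - {0}"
    then have "f t = t powi (- \<nu>) * h t" using d(2) by (auto simp: dist_commute)
    moreover have "t powi (- \<nu>) = inverse (t ^ nat \<nu>)"
      using assms(1) by (simp add: power_int_minus flip: power_int_of_nat)
    ultimately show "f t = h t / t ^ nat \<nu>"
      by (simp add: divide_inverse mult.commute)
  qed (use assms d in auto)
qed

text \<open>A function vanishing near 0 satisfies pole_order_le vacuously, so that case is split off.\<close>

lemma meromorphic_pole_bound:
  assumes "f meromorphic_on {0}" "pole_order_le f (int E)"
  shows "pole_bound E f"
proof (cases "\<forall>\<^sub>F t in at 0. f t = 0")
  case True
  then obtain d where d: "d > 0" "\<forall>x. x \<noteq> 0 \<and> dist x 0 < d \<longrightarrow> f x = 0"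
    by (auto simp: eventually_at)
  show ?thesis unfolding pole_bound_def pole_bound_lead_def
    by (rule exI[of _ 0], rule exI[of _ d], use d in \<open>auto intro!: exI[of _ "\<lambda>_. 0"]\<close>)
next
  case False
  have iso: "isolated_singularity_at f 0" "not_essential f 0"
    using assms(1) by (auto simp: meromorphic_at_iff)
  have "\<exists>\<^sub>F w in at 0. f w \<noteq> 0" using False by (simp add: not_eventually)
  then obtain r where r: "zor_poly f 0 0 \<noteq> 0" "r > 0" "zor_poly f 0 holomorphic_on cball 0 r"
    "\<forall>w\<in>cball 0 r - {0}. f w = zor_poly f 0 w * (w - 0) powi zorder f 0"
    using zorder_exist[OF iso] by blast
  define g where "g = zor_poly f 0"
  define z where "z = zorder f 0"
  have g_holo: "g holomorphic_on ball 0 r"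
    using r(3) unfolding g_def by (rule holomorphic_on_subset) (rule ball_subset_cball)
  have "\<forall>\<^sub>F t in at 0. f t = t powi (- (- z)) * g t"
    using r(2,4) unfolding g_def z_def
    by (auto simp: eventually_at dist_commute intro!: exI[of _ r])
  then have le: "- z \<le> int E"
    using assms(2) r(1,2) g_holo unfolding pole_order_le_def g_def by blast
  show ?thesis unfolding pole_bound_def pole_bound_lead_def
  proof (intro exI[of _ r] exI conjI exI[of _ "\<lambda>t. g t * t ^ nat (z + int E)"] ballI)
    show "(\<lambda>t. g t * t ^ nat (z + int E)) holomorphic_on ball 0 r"
      using g_holo by (intro holomorphic_intros)
    fix t :: complex assume t: "t \<in> ball 0 r - {0}"
    have "t powi z = t powi (int (nat (z + int E)) + (- int E))" using le by simp
    also have "\<dots> = t powi (int (nat (z + int E))) * t powi (- int E)"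
      by (rule power_int_add) (use t in auto)
    also have "\<dots> = t ^ nat (z + int E) / t ^ E"
      by (simp only: power_int_minus power_int_of_nat divide_inverse)
    finally show "f t = g t * t ^ nat (z + int E) / t ^ E"
      using r(4) t unfolding g_def z_def by auto
  qed (use r in auto)
qed

lemma holo_coeffs_series_holomorphic:
  assumes "holo_coeffs n m" "\<beta> \<in> multi_idx n"
  obtains \<rho> where "\<rho> > 0" "(\<lambda>t. \<Sum>q. m p q \<beta> * t ^ q) holomorphic_on ball 0 \<rho>"
proof -
  obtain \<rho> where \<rho>: "\<rho> > 0" and sm: "(\<lambda>(p, q, \<beta>). norm (m p q \<beta>) * \<rho> ^ (p + q + sum \<beta> {..n}))
       summable_on (UNIV \<times> UNIV \<times> multi_idx n)"
    using assms(1) unfolding holo_coeffs_def by blast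
  define S where "S = sum \<beta> {..n}"
  have "(\<lambda>(p, q, \<beta>). norm (m p q \<beta>) * \<rho> ^ (p + q + sum \<beta> {..n})) summable_on (\<lambda>q. (p, q, \<beta>)) ` UNIV"
    by (rule summable_on_subset_banach[OF sm]) (use assms(2) in auto)
  then have "(\<lambda>q. norm (m p q \<beta>) * \<rho> ^ (p + q + S)) summable_on UNIV"
    by (subst (asm) summable_on_reindex) (auto simp: inj_on_def o_def S_def)
  then have "summable (\<lambda>q. \<rho> ^ (p + S) * (norm (m p q \<beta>) * \<rho> ^ q))"
    using \<rho> by (subst (asm) summable_on_UNIV_nonneg_real_iff) (auto simp: power_add ac_simps)
  then have "summable (\<lambda>q. norm (m p q \<beta> * (complex_of_real \<rho>) ^ q))"
    using \<rho> by (simp add: summable_cmult_iff norm_mult norm_power)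
  then have "summable (\<lambda>q. m p q \<beta> * (complex_of_real \<rho>) ^ q)"
    by (rule summable_norm_cancel)
  then have "conv_radius (\<lambda>q. m p q \<beta>) \<ge> \<rho>"
    using conv_radius_geI[of "\<lambda>q. m p q \<beta>" "complex_of_real \<rho>"] \<rho> by simp
  then have "ball 0 \<rho> \<subseteq> eball 0 (fps_conv_radius (Abs_fps (\<lambda>q. m p q \<beta>)))"
    by (auto simp: fps_conv_radius_def eball_def intro: less_le_trans[of _ "ereal \<rho>"])
  then have "eval_fps (Abs_fps (\<lambda>q. m p q \<beta>)) holomorphic_on ball 0 \<rho>"
    by (rule holomorphic_on_eval_fps)
  then show ?thesis using \<rho> that unfolding eval_fps_def by simp
qed

definition coeffs_pole_bound :: "nat \<Rightarrow> nat \<Rightarrow> (complex \<Rightarrow> complex fps) \<Rightarrow> bool" where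
  "coeffs_pole_bound \<mu> K F \<longleftrightarrow> (\<forall>i\<le>K. pole_bound (i * \<mu>) (\<lambda>t. fps_nth (F t) i))"

lemma coeffs_pole_bound_one: "coeffs_pole_bound \<mu> K (\<lambda>t. 1)"
  unfolding coeffs_pole_bound_def pole_bound_def
  using pole_bound_lead_const[of 1] pole_bound_lead_zero by (auto simp: fps_one_nth)

lemma coeffs_pole_bound_mult:
  assumes "coeffs_pole_bound \<mu> K F" "coeffs_pole_bound \<mu> K G"
  shows "coeffs_pole_bound \<mu> K (\<lambda>t. F t * G t)"
  unfolding coeffs_pole_bound_def
proof (intro allI impI)
  fix i assume i: "i \<le> K"
  have "pole_bound (i * \<mu>) (\<lambda>t. fps_nth (F t) l * fps_nth (G t) (i - l))" if l: "l \<in> {0..i}" for l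
  proof -
    have "pole_bound (l * \<mu> + (i - l) * \<mu>) (\<lambda>t. fps_nth (F t) l * fps_nth (G t) (i - l))"
      using assms i l unfolding coeffs_pole_bound_def by (intro pole_bound_mult) auto
    moreover have "l * \<mu> + (i - l) * \<mu> = i * \<mu>"
      using l by (simp add: add_mult_distrib[symmetric])
    ultimately show ?thesis by simp
  qed
  then show "pole_bound (i * \<mu>) (\<lambda>t. fps_nth (F t * G t) i)"
    unfolding fps_mult_nth by (intro pole_bound_sum) auto
qed

lemma coeffs_pole_bound_power: "coeffs_pole_bound \<mu> K F \<Longrightarrow> coeffs_pole_bound \<mu> K (\<lambda>t. F t ^ b)"
  by (induction b) (auto intro: coeffs_pole_bound_mult coeffs_pole_bound_one)

lemma coeffs_pole_bound_prod:
  assumes "finite A" "\<forall>j\<in>A. coeffs_pole_bound \<mu> K (F j)"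
  shows "coeffs_pole_bound \<mu> K (\<lambda>t. \<Prod>j\<in>A. F j t)"
  using assms by (induction A rule: finite_induct) (auto intro: coeffs_pole_bound_mult coeffs_pole_bound_one)

lemma delta_ser_coeffs_pole_bound:
  assumes "\<forall>i. 1 \<le> i \<longrightarrow> i \<le> K \<longrightarrow> pole_bound (i * \<mu>) (c i)"
  shows "coeffs_pole_bound \<mu> K (delta_ser \<gamma> j c)"
  unfolding coeffs_pole_bound_def
proof (intro allI impI)
  fix i assume i: "i \<le> K"
  show "pole_bound (i * \<mu>) (\<lambda>t. fps_nth (delta_ser \<gamma> j c t) i)"
  proof (cases "i = 0")
    case True
    then show ?thesis unfolding delta_ser_def pole_bound_def using pole_bound_lead_zero by auto
  next
    case False
    then have "pole_bound (i * \<mu>) (c i)" using assms i by simp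
    then obtain v where "pole_bound_lead (i * \<mu>) (c i) v"
      unfolding pole_bound_def by blast
    from pole_bound_lead_dop_funpow[OF this, where \<gamma>=\<gamma> and s="of_nat i" and j=j]
    show ?thesis unfolding delta_ser_def pole_bound_def using False by auto
  qed
qed

lemma subst_coeff_pole_bound:
  assumes "holo_coeffs n m" "\<forall>i. 1 \<le> i \<longrightarrow> i \<le> K \<longrightarrow> pole_bound (i * \<mu>) (c i)"
  shows "pole_bound (K * \<mu>) (subst_coeff n \<gamma> m c K)"
proof -
  have "pole_bound (K * \<mu>) (\<lambda>t. (\<Sum>q. m p q \<beta> * t ^ q) *
      fps_nth (\<Prod>j\<in>{..n}. (delta_ser \<gamma> j c t) ^ \<beta> j) (K - p))"
    if "\<beta> \<in> PiE {..n} (\<lambda>_. {..K})" for p \<beta>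
  proof -
    have "\<beta> \<in> multi_idx n" using that unfolding multi_idx_def by (auto simp: PiE_iff)
    then obtain \<rho> where "\<rho> > 0" "(\<lambda>t. \<Sum>q. m p q \<beta> * t ^ q) holomorphic_on ball 0 \<rho>"
      using holo_coeffs_series_holomorphic[OF assms(1)] by blast
    then have "pole_bound 0 (\<lambda>t. \<Sum>q. m p q \<beta> * t ^ q)"
      unfolding pole_bound_def using pole_bound_lead_holomorphic by blast
    moreover have "coeffs_pole_bound \<mu> K (\<lambda>t. \<Prod>j\<in>{..n}. delta_ser \<gamma> j c t ^ \<beta> j)"
      using delta_ser_coeffs_pole_bound[OF assms(2)]
      by (intro coeffs_pole_bound_prod coeffs_pole_bound_power ballI) auto
    then have "pole_bound ((K - p) * \<mu>) (\<lambda>t. fps_nth (\<Prod>j\<in>{..n}. (delta_ser \<gamma> j c t) ^ \<beta> j) (K - p))"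
      unfolding coeffs_pole_bound_def by auto
    ultimately show ?thesis
      by (rule pole_bound_mono[OF pole_bound_mult]) auto
  qed
  then have "pole_bound (K * \<mu>) (\<lambda>t. \<Sum>p\<in>{..K}. \<Sum>\<beta>\<in>PiE {..n} (\<lambda>_. {..K}).
      (\<Sum>q. m p q \<beta> * t ^ q) * fps_nth (\<Prod>j\<in>{..n}. (delta_ser \<gamma> j c t) ^ \<beta> j) (K - p))"
    by (intro pole_bound_sum ballI) (auto intro: finite_PiE)
  then show ?thesis
    unfolding subst_coeff_def[abs_def] .
qed

lemma indicial_sum_zero:
  assumes a: "\<forall>j\<le>n. \<exists>\<rho>>0. a j holomorphic_on ball 0 \<rho>"
    and f: "pole_bound_lead e f v"
    and g: "pole_bound b g" "b < e"
    and eq: "\<forall>\<^sub>F t in at 0. (\<Sum>j\<le>n. a j t * (dop \<gamma> s ^^ j) f t) = g t"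
  shows "(\<Sum>j\<le>n. a j 0 * (s - \<i> * of_real \<gamma> * of_nat e) ^ j) * v = 0"
proof -
  have "pole_bound_lead e (\<lambda>t. a j t * (dop \<gamma> s ^^ j) f t)
      (a j 0 * ((s - \<i> * of_real \<gamma> * of_nat e) ^ j * v))" if j: "j \<le> n" for j
  proof -
    obtain \<rho> where "a j holomorphic_on ball 0 \<rho>" "\<rho> > 0" using a j by blast
    then have "pole_bound_lead 0 (a j) (a j 0)" by (rule pole_bound_lead_holomorphic)
    from pole_bound_lead_mult[OF this pole_bound_lead_dop_funpow[OF f]] show ?thesis by simp
  qed
  then have "pole_bound_lead e (\<lambda>t. \<Sum>j\<le>n. a j t * (dop \<gamma> s ^^ j) f t)
      (\<Sum>j\<le>n. a j 0 * ((s - \<i> * of_real \<gamma> * of_nat e) ^ j * v))"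
    by (intro pole_bound_lead_sum finite_atMost ballI) simp
  from pole_bound_lead_eq_zero_if_lower[OF this g(1) eq g(2)]
  show ?thesis by (simp add: sum_distrib_right mult.assoc)
qed

lemma pole_order_le_if_indicial_nonzero:
  assumes a: "\<forall>j\<le>n. \<exists>\<rho>>0. a j holomorphic_on ball 0 \<rho>"
    and g: "pole_bound b g"
    and eq: "\<forall>\<^sub>F t in at 0. (\<Sum>j\<le>n. a j t * (dop \<gamma> s ^^ j) f t) = g t"
    and indicial: "\<And>e. b < e \<Longrightarrow> (\<Sum>j\<le>n. a j 0 * (s - \<i> * of_real \<gamma> * of_nat e) ^ j) \<noteq> 0"
  shows "pole_order_le f (int b)"
  unfolding pole_order_le_def
proof (intro allI impI, rule ccontr)
  fix \<nu> :: int and h :: "complex \<Rightarrow> complex"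
  assume H: "(\<exists>\<rho>>0. h holomorphic_on ball 0 \<rho>) \<and> h 0 \<noteq> 0 \<and>
      (\<forall>\<^sub>F t in at 0. f t = t powi (- \<nu>) * h t)" and "\<not> \<nu> \<le> int b"
  then have \<nu>: "\<nu> \<ge> 0" "b < nat \<nu>" by linarith+
  have "pole_bound_lead (nat \<nu>) f (h 0)"
    using H pole_bound_lead_of_powi[OF \<nu>(1)] by blast
  from indicial_sum_zero[OF a this g \<nu>(2) eq] indicial[OF \<nu>(2)] H show False by simp
qed

theorem lemma3:
  fixes n N \<mu> :: nat and \<gamma> :: real and r :: real
    and a :: "nat \<Rightarrow> complex \<Rightarrow> complex"
    and m :: "nat \<Rightarrow> nat \<Rightarrow> (nat \<Rightarrow> nat) \<Rightarrow> complex"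
    and c :: "nat \<Rightarrow> complex \<Rightarrow> complex"
  assumes n_ge: "n \<ge> 1"
    and gamma_nz: "\<gamma> \<noteq> 0"
    and r_pos: "r > 0"
    and a_holo: "\<forall>j\<le>n. a j holomorphic_on ball 0 r"
    and a_n: "\<forall>t\<in>ball 0 r. a n t = 1"
    and M_holo: "holo_coeffs n m"
    and no_int_roots: "\<forall>k::nat\<ge>1. \<forall>l::int.
        (\<Sum>j\<le>n. a j 0 * (of_nat (k + N) + \<i> * of_real \<gamma> * of_int l) ^ j) \<noteq> 0"
    and c_mero: "\<forall>k\<ge>1. c k meromorphic_on {0}"
    and solution: "\<forall>k\<ge>1. \<forall>\<^sub>F t in at 0.
        (\<Sum>j\<le>n. a j t * ((dop \<gamma> (of_nat (k + N))) ^^ j) (c k) t)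
          = inverse (t ^ \<mu>) * subst_coeff n \<gamma> m c (k - 1) t"
  shows "\<forall>k\<ge>1. \<forall>\<nu>::int. \<forall>h::complex \<Rightarrow> complex.
           ((\<exists>\<rho>>0. h holomorphic_on ball 0 \<rho>) \<and> h 0 \<noteq> 0 \<and>
            (\<forall>\<^sub>F t in at 0. c k t = t powi (- \<nu>) * h t))
           \<longrightarrow> \<nu> \<le> int k * int \<mu>"
proof -
  have "k \<ge> 1 \<longrightarrow> pole_order_le (c k) (int k * int \<mu>)" for k
  proof (induction k rule: less_induct)
    case (less k)
    show ?case
    proof (intro impI)
      assume k: "k \<ge> 1"
      have "pole_bound (i * \<mu>) (c i)" if "1 \<le> i" "i \<le> k - 1" for i
        using that k c_mero less.IH[of i] by (intro meromorphic_pole_bound) auto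
      then have "pole_bound ((k - 1) * \<mu>) (subst_coeff n \<gamma> m c (k - 1))"
        by (intro subst_coeff_pole_bound M_holo allI impI)
      then have "pole_bound (\<mu> + (k - 1) * \<mu>) (\<lambda>t. inverse (t ^ \<mu>) * subst_coeff n \<gamma> m c (k - 1) t)"
        unfolding pole_bound_def using pole_bound_lead_mult[OF pole_bound_lead_inverse_power] by blast
      moreover have "\<mu> + (k - 1) * \<mu> = k * \<mu>" using k by (cases k) auto
      ultimately have rhs: "pole_bound (k * \<mu>) (\<lambda>t. inverse (t ^ \<mu>) * subst_coeff n \<gamma> m c (k - 1) t)"
        by simp
      have "(\<Sum>j\<le>n. a j 0 * (of_nat (k + N) - \<i> * of_real \<gamma> * of_nat e) ^ j) \<noteq> 0" for e
        using no_int_roots[rule_format, OF k, of "- int e"]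
        by (simp only: of_int_minus of_int_of_nat_eq mult_minus_right diff_conv_add_uminus not_False_eq_True)
      moreover have "\<forall>j\<le>n. \<exists>\<rho>>0. a j holomorphic_on ball 0 \<rho>"
        using a_holo r_pos by blast
      ultimately have "pole_order_le (c k) (int (k * \<mu>))"
        using pole_order_le_if_indicial_nonzero[OF _ rhs solution[rule_format, OF k]] by blast
      then show "pole_order_le (c k) (int k * int \<mu>)" by simp
    qed
  qed
  then show ?thesis unfolding pole_order_le_def by blast
qed

end
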